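(* Let $G$ be a gap-free finite simple graph, $s\geq1$, and $e_1,\dots,e_s$ edges of $G$ (repetitions allowed), and let $G'$ be the graph associated to $(I(G)^{s+1}:e_1\cdots e_s)^{\mathrm{pol}}$. If $w_1,\dots,w_n$ with $n\geq5$ is an anticycle in $G'$, then $w_1,\dots,w_n$ are vertices of $G$ and form an anticycle in $G$.
   Context: $S=K[x_1,\dots,x_n]$ with the $x_i$ the vertices of $G$; $I(G)=(xy: xy\text{ an edge})$; edges identified with monomials; $(J:m)=\{f: fm\in J\}$; $J=(I(G)^{s+1}:e_1\cdots e_s)$ is generated by quadratic monomials. $J^{\mathrm{pol}}\subseteq K[x_1,\dots,x_n,x_1',\dots,x_n']$ is generated by all $x_ix_j$ ($i\ne j$) with $x_ix_j\in J$ and all $x_kx_k'$ with $x_k^2\in J$. The associated graph $G'$ has vertex set $V(G)\cup\{x_k' : x_k^2\in J\}$ and edges $\{x_ix_j: i\ne j, x_ix_j\in J\}\cup\{x_kx_k' : x_k^2\in J\}$. Distinct vertices $w_1,\dots,w_n$ form an anticycle in a graph $H$ if the induced subgraph of $H$ on them has complement equal to the cycle $w_1w_2\cdots w_nw_1$, i.e. $w_iw_j$ is an edge of $H$ iff $j\not\equiv i\pm1 \pmod n$. Gap-free: no two vertex-disjoint edges $uv$, $xy$ with no edge between $\{u,v\}$ and $\{x,y\}$. *)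

theory Defs
  imports Main "HOL-Library.Multiset"
begin

text \<open>Simple graphs: finite vertex set V with a symmetric irreflexive edge relation E on V.
Monomials in the variables (vertices) are represented as multisets of vertices.\<close>

definition simple_graph :: "'a set \<Rightarrow> ('a \<Rightarrow> 'a \<Rightarrow> bool) \<Rightarrow> bool" where
  "simple_graph V E \<longleftrightarrow> finite V \<and> (\<forall>u v. E u v \<longrightarrow> u \<in> V \<and> v \<in> V \<and> u \<noteq> v \<and> E v u)"

definition gap_free :: "('a \<Rightarrow> 'a \<Rightarrow> bool) \<Rightarrow> bool" where
  "gap_free E \<longleftrightarrow> \<not> (\<exists>u v x y. E u v \<and> E x y \<and> u \<noteq> x \<and> u \<noteq> y \<and> v \<noteq> x \<and> v \<noteq> y \<and>
       \<not> E u x \<and> \<not> E u y \<and> \<not> E v x \<and> \<not> E v y)"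

definition edge_mon :: "'a \<times> 'a \<Rightarrow> 'a multiset" where
  "edge_mon e = {#fst e, snd e#}"

text \<open>A monomial m lies in the monomial ideal I(G)^k iff it is divisible by a product of k edges.\<close>
definition in_edge_power :: "('a \<Rightarrow> 'a \<Rightarrow> bool) \<Rightarrow> nat \<Rightarrow> 'a multiset \<Rightarrow> bool" where
  "in_edge_power E k m \<longleftrightarrow>
     (\<exists>fs. length fs = k \<and> (\<forall>f\<in>set fs. E (fst f) (snd f)) \<and> sum_list (map edge_mon fs) \<subseteq># m)"

text \<open>Monomial m lies in J = (I(G)^(s+1) : e_1 ... e_s), where es = [e_1,...,e_s].\<close>
definition in_colon :: "('a \<Rightarrow> 'a \<Rightarrow> bool) \<Rightarrow> ('a \<times> 'a) list \<Rightarrow> 'a multiset \<Rightarrow> bool" where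
  "in_colon E es m \<longleftrightarrow> in_edge_power E (length es + 1) (m + sum_list (map edge_mon es))"

text \<open>The graph G' associated to J^pol; original vertices x are Inl x, new vertices x' are Inr x.\<close>
definition pol_vertices :: "'a set \<Rightarrow> ('a \<Rightarrow> 'a \<Rightarrow> bool) \<Rightarrow> ('a \<times> 'a) list \<Rightarrow> ('a + 'a) set" where
  "pol_vertices V E es = Inl ` V \<union> Inr ` {k \<in> V. in_colon E es {#k, k#}}"

fun pol_edge :: "('a \<Rightarrow> 'a \<Rightarrow> bool) \<Rightarrow> ('a \<times> 'a) list \<Rightarrow> ('a + 'a) \<Rightarrow> ('a + 'a) \<Rightarrow> bool" where
  "pol_edge E es (Inl i) (Inl j) = (i \<noteq> j \<and> in_colon E es {#i, j#})"
| "pol_edge E es (Inl k) (Inr k') = (k = k' \<and> in_colon E es {#k, k#})"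
| "pol_edge E es (Inr k') (Inl k) = (k = k' \<and> in_colon E es {#k, k#})"
| "pol_edge E es (Inr _) (Inr _) = False"

definition anticycle :: "'b set \<Rightarrow> ('b \<Rightarrow> 'b \<Rightarrow> bool) \<Rightarrow> 'b list \<Rightarrow> bool" where
  "anticycle W H ws \<longleftrightarrow> distinct ws \<and> set ws \<subseteq> W \<and>
     (\<forall>i < length ws. \<forall>j < length ws. i \<noteq> j \<longrightarrow>
        (H (ws ! i) (ws ! j) \<longleftrightarrow> \<not> (j = Suc i mod length ws \<or> i = Suc j mod length ws)))"

end

theory Submission
  imports Defs
begin

text \<open>A new vertex \<open>x'\<close> of \<open>G'\<close> has \<open>x\<close> as its only neighbour, whereas in an anticycle of length at
least 5 every vertex is adjacent to two distinct vertices; so the anticycle lies in \<open>G\<close>. There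
\<open>xy\<close> lies in \<open>(I(G)\<^sup>s\<^sup>+\<^sup>1 : e\<^sub>1\<cdots>e\<^sub>s)\<close> iff \<open>xy e\<^sub>1\<cdots>e\<^sub>s\<close> is a product of edges (\<open>x\<close> and \<open>y\<close>
are \<^emph>\<open>linked\<close>), which holds in particular for edges \<open>xy\<close>.

Suppose two vertices \<open>x\<close>, \<open>y\<close> of the anticycle are linked but not adjacent. Peeling off the
factor of such a product at \<open>x\<close> yields an edge \<open>ab\<close> among the \<open>e\<^sub>i\<close> with \<open>xa\<close> an edge and \<open>b\<close>, \<open>y\<close>
linked through the remaining \<open>e\<^sub>i\<close>. Let \<open>A\<close> be the neighbours of \<open>a\<close> and \<open>B\<close> the vertices so
linked to \<open>b\<close>; every vertex of \<open>A\<close> is linked to every vertex of \<open>B\<close>. Consecutive vertices of the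
anticycle are not linked, so walking along either arc from \<open>y \<in> B\<close> to \<open>x \<in> A\<close> meets a vertex
outside \<open>A \<union> B\<close>; on one arc take the first vertex \<open>z\<close> leaving \<open>B\<close>, on the other any such \<open>w\<close>.
Then \<open>z\<close> and \<open>w\<close> are not consecutive, hence linked, while gap-freeness forces every vertex
linked to \<open>z\<close> into \<open>A \<union> B\<close> (lemma \<open>gap_free_linked_exit\<close>, by induction on the number of edges).\<close>

abbreviation edge_list :: "('a \<Rightarrow> 'a \<Rightarrow> bool) \<Rightarrow> ('a \<times> 'a) list \<Rightarrow> bool" where
  "edge_list E L \<equiv> \<forall>f\<in>set L. E (fst f) (snd f)"

definition edges_mset :: "('a \<times> 'a) list \<Rightarrow> 'a multiset" where
  "edges_mset L = sum_list (map edge_mon L)"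

definition decomposable :: "('a \<Rightarrow> 'a \<Rightarrow> bool) \<Rightarrow> 'a multiset \<Rightarrow> bool" where
  "decomposable E m \<longleftrightarrow> (\<exists>fs. edge_list E fs \<and> edges_mset fs = m)"

definition linked :: "('a \<Rightarrow> 'a \<Rightarrow> bool) \<Rightarrow> ('a \<times> 'a) list \<Rightarrow> 'a \<Rightarrow> 'a \<Rightarrow> bool" where
  "linked E L x y \<longleftrightarrow> decomposable E ({#x, y#} + edges_mset L)"

lemma edge_list_remove1: "edge_list E L \<Longrightarrow> edge_list E (remove1 x L)"
  using set_remove1_subset by fast

lemma length_remove1_less: "x \<in> set xs \<Longrightarrow> length (remove1 x xs) < length xs"
  using length_pos_if_in_set[of x xs] by (simp add: length_remove1)

lemma edges_mset_remove1: "e \<in> set L \<Longrightarrow> edges_mset L = edge_mon e + edges_mset (remove1 e L)"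
  unfolding edges_mset_def by (rule sum_list_map_remove1)

lemma size_edges_mset: "size (edges_mset L) = 2 * length L"
  unfolding edges_mset_def by (induction L) (auto simp: edge_mon_def)

lemma mem_edges_mset:
  assumes "p \<in># edges_mset L"
  obtains e q where "e \<in> set L" "edge_mon e = {#p, q#}"
proof -
  obtain e where e: "e \<in> set L" "p \<in># edge_mon e"
    using assms unfolding edges_mset_def by (induction L) auto
  moreover from e(2) have "\<exists>q. edge_mon e = {#p, q#}"
    by (auto simp: edge_mon_def add_mset_commute)
  ultimately show thesis using that by blast
qed

lemma pair_mset_eq_iff: "{#a, b#} = {#c, d#} \<longleftrightarrow> (a = c \<and> b = d) \<or> (a = d \<and> b = c)"
  by (auto simp: add_eq_conv_ex add_mset_commute)

lemma edge_if_edge_mon: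
  assumes "symp E" "E (fst e) (snd e)" "edge_mon e = {#a, b#}"
  shows "E a b"
  using assms by (auto simp: edge_mon_def pair_mset_eq_iff dest: sympD)

lemma decomposable_empty: "decomposable E {#}"
  unfolding decomposable_def edges_mset_def by (rule exI[of _ "[]"]) simp

lemma decomposable_add: "decomposable E m1 \<Longrightarrow> decomposable E m2 \<Longrightarrow> decomposable E (m1 + m2)"
  unfolding decomposable_def edges_mset_def
  by (metis Un_iff map_append set_append sum_list_append)

lemma decomposable_edge: "E x y \<Longrightarrow> decomposable E {#x, y#}"
  unfolding decomposable_def edges_mset_def
  by (rule exI[of _ "[(x, y)]"]) (simp add: edge_mon_def)

lemma decomposable_edges_mset: "edge_list E L \<Longrightarrow> decomposable E (edges_mset L)"
  unfolding decomposable_def by blast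

lemma decomposable_remove_vertex:
  assumes "symp E" "decomposable E m" "x \<in># m"
  obtains p r where "E x p" "decomposable E r" "m = {#x, p#} + r"
proof -
  obtain fs where fs: "edge_list E fs" "edges_mset fs = m"
    using assms(2) unfolding decomposable_def by blast
  then obtain f p where f: "f \<in> set fs" "edge_mon f = {#x, p#}"
    using assms(3) mem_edges_mset by metis
  have "E x p" using assms(1) fs(1) f by (blast intro: edge_if_edge_mon)
  moreover have "decomposable E (edges_mset (remove1 f fs))"
    using edge_list_remove1[OF fs(1)] by (rule decomposable_edges_mset)
  moreover have "m = {#x, p#} + edges_mset (remove1 f fs)"
    using fs(2) f edges_mset_remove1 by metis
  ultimately show thesis by (rule that)
qed

lemma in_colon_pair_iff_linked: "in_colon E es {#x, y#} \<longleftrightarrow> linked E es x y"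
  unfolding linked_def
proof
  assume "in_colon E es {#x, y#}"
  then obtain fs where fs: "length fs = length es + 1" "edge_list E fs"
    "edges_mset fs \<subseteq># {#x, y#} + edges_mset es"
    unfolding in_colon_def in_edge_power_def edges_mset_def by blast
  have "size (edges_mset fs) = size ({#x, y#} + edges_mset es)"
    using fs(1) by (simp add: size_edges_mset)
  then have "edges_mset fs = {#x, y#} + edges_mset es"
    using fs(3) mset_subset_size subset_mset.le_imp_less_or_eq by fastforce
  then show "decomposable E ({#x, y#} + edges_mset es)"
    unfolding decomposable_def using fs(2) by blast
next
  assume "decomposable E ({#x, y#} + edges_mset es)"
  then obtain fs where fs: "edge_list E fs" "edges_mset fs = {#x, y#} + edges_mset es"
    unfolding decomposable_def by blast
  have "length fs = length es + 1"
    using arg_cong[OF fs(2), of size] by (simp add: size_edges_mset)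
  then show "in_colon E es {#x, y#}"
    unfolding in_colon_def in_edge_power_def using fs by (metis edges_mset_def subset_mset.order_refl)
qed

lemma linked_sym: "linked E L x y \<longleftrightarrow> linked E L y x"
  unfolding linked_def by (simp add: add_mset_commute)

lemma symp_linked: "symp (linked E L)"
  by (rule sympI) (simp add: linked_sym)

lemma linked_if_edge: "E x y \<Longrightarrow> edge_list E L \<Longrightarrow> linked E L x y"
  unfolding linked_def by (intro decomposable_add decomposable_edge decomposable_edges_mset)

lemma linked_remove1D:
  assumes "g \<in> set L" "E (fst g) (snd g)" "linked E (remove1 g L) x y"
  shows "linked E L x y"
proof -
  have "decomposable E (({#x, y#} + edges_mset (remove1 g L)) + {#fst g, snd g#})"
    using decomposable_add[OF assms(3)[unfolded linked_def] decomposable_edge[of E, OF assms(2)]] .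
  then show ?thesis
    unfolding linked_def edges_mset_remove1[OF assms(1)] by (simp add: edge_mon_def ac_simps add_mset_commute)
qed

lemma linked_via_edge:
  assumes "e \<in> set L" "edge_mon e = {#a, b#}" "E z a" "linked E (remove1 e L) b w"
  shows "linked E L z w"
proof -
  have "decomposable E ({#z, a#} + ({#b, w#} + edges_mset (remove1 e L)))"
    using decomposable_add[OF decomposable_edge[of E z a, OF assms(3)] assms(4)[unfolded linked_def]] .
  then show ?thesis
    unfolding linked_def edges_mset_remove1[OF assms(1)] assms(2)
    by (simp add: ac_simps add_mset_commute)
qed

lemma linked_nonedgeE:
  assumes "symp E" "linked E L x y" "\<not> E x y"
  obtains e a b where "e \<in> set L" "edge_mon e = {#a, b#}" "E x a" "linked E (remove1 e L) b y"
proof -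
  obtain p r where pr: "E x p" "decomposable E r" "{#x, y#} + edges_mset L = {#x, p#} + r"
    using decomposable_remove_vertex[OF assms(1) assms(2)[unfolded linked_def], of x] by auto
  then have eq: "add_mset y (edges_mset L) = add_mset p r" by simp
  moreover have "p \<noteq> y" using pr(1) assms(3) by blast
  ultimately have "p \<in># edges_mset L" by (metis insert_noteq_member)
  then obtain e b where e: "e \<in> set L" "edge_mon e = {#p, b#}" by (rule mem_edges_mset)
  have "r = {#b, y#} + edges_mset (remove1 e L)"
    using eq unfolding edges_mset_remove1[OF e(1)] e(2) by (simp add: add_mset_commute)
  then have "linked E (remove1 e L) b y" using pr(2) unfolding linked_def by simp
  then show thesis by (rule that[OF e pr(1)])
qed

text \<open>A decomposition of \<open>uv \<cdot> pq \<cdot> M\<close> that runs from \<open>u\<close> to \<open>p\<close>, through the edge \<open>pq\<close>, and from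
\<open>q\<close> to \<open>v\<close>.\<close>

definition split_linked ::
  "('a \<Rightarrow> 'a \<Rightarrow> bool) \<Rightarrow> 'a multiset \<Rightarrow> 'a \<Rightarrow> 'a \<Rightarrow> 'a \<Rightarrow> 'a \<Rightarrow> bool" where
  "split_linked E M u p q v \<longleftrightarrow>
     (\<exists>M1 M2. M = M1 + M2 \<and> decomposable E M1 \<and> decomposable E M2 \<and>
        decomposable E ({#u, p#} + M1) \<and> decomposable E ({#q, v#} + M2))"

lemma split_linked_swap:
  assumes "split_linked E M u p q v"
  shows "split_linked E M v q p u"
proof -
  obtain M1 M2 where M: "M = M1 + M2" "decomposable E M1" "decomposable E M2"
    "decomposable E ({#u, p#} + M1)" "decomposable E ({#q, v#} + M2)"
    using assms unfolding split_linked_def by blast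
  show ?thesis
    unfolding split_linked_def
    by (rule exI[of _ M2], rule exI[of _ M1]) (use M in \<open>simp add: add.commute add_mset_commute\<close>)
qed

lemma split_linked_reroute:
  assumes "split_linked E (edges_mset (remove1 g L)) u p q v" "g \<in> set L" "edge_mon g = {#p, q#}"
    and "E z p"
  shows "linked E L z v"
proof -
  obtain M1 M2 where M: "edges_mset (remove1 g L) = M1 + M2" "decomposable E M1"
    "decomposable E ({#q, v#} + M2)"
    using assms(1) unfolding split_linked_def by blast
  have "decomposable E ({#z, p#} + ({#q, v#} + M2) + M1)"
    using decomposable_add[OF decomposable_add[OF decomposable_edge[of E z p, OF assms(4)] M(3)] M(2)] .
  then show ?thesis
    unfolding linked_def edges_mset_remove1[OF assms(2)] assms(3) M(1)
    by (simp add: ac_simps add_mset_commute)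
qed

lemma split_linked_start:
  assumes "E u p" "edge_list E L" "linked E L q v"
  shows "split_linked E (edges_mset L) u p q v"
  unfolding split_linked_def
  by (rule exI[of _ "{#}"], rule exI[of _ "edges_mset L"])
    (use assms in \<open>simp add: linked_def decomposable_empty decomposable_edges_mset decomposable_edge\<close>)

lemma split_linked_extend:
  assumes "E u a" "E a b" "split_linked E M b p q v"
  shows "split_linked E ({#a, b#} + M) u p q v"
proof -
  obtain M1 M2 where M: "M = M1 + M2" "decomposable E M1" "decomposable E M2"
    "decomposable E ({#b, p#} + M1)" "decomposable E ({#q, v#} + M2)"
    using assms(3) unfolding split_linked_def by blast
  have M1': "decomposable E ({#a, b#} + M1)"
    using decomposable_add[OF decomposable_edge[of E a b, OF assms(2)] M(2)] .
  have up: "decomposable E ({#u, p#} + ({#a, b#} + M1))"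
    using decomposable_add[OF decomposable_edge[of E u a, OF assms(1)] M(4)]
    by (simp add: ac_simps add_mset_commute)
  show ?thesis
    unfolding split_linked_def M(1)
    by (rule exI[of _ "{#a, b#} + M1"], rule exI[of _ M2]) (use M M1' up in \<open>simp add: add.assoc\<close>)
qed

lemma linked_remove1_cases:
  assumes "symp E" "edge_list E L" "linked E L u v" "f \<in> set L" "edge_mon f = {#p, q#}"
  shows "linked E (remove1 f L) u v \<or> split_linked E (edges_mset (remove1 f L)) u p q v \<or>
    split_linked E (edges_mset (remove1 f L)) u q p v"
  using assms(2-)
proof (induction "length L" arbitrary: L u rule: less_induct)
  case less
  have edges_f: "edge_list E (remove1 f L)"
    using less.prems(1) by (rule edge_list_remove1)
  show ?case
  proof (cases "E u v")
    case True
    then show ?thesis using edges_f by (simp add: linked_if_edge)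
  next
    case False
    obtain e a b where e: "e \<in> set L" "edge_mon e = {#a, b#}" "E u a" "linked E (remove1 e L) b v"
      using linked_nonedgeE[OF assms(1) less.prems(2) False] .
    show ?thesis
    proof (cases "e = f")
      case True
      then have "(a = p \<and> b = q) \<or> (a = q \<and> b = p)"
        using e(2) less.prems(4) by (auto simp: pair_mset_eq_iff)
      then show ?thesis
        using split_linked_start[OF e(3) edges_f] e(4) True by auto
    next
      case False
      have f_in: "f \<in> set (remove1 e L)" and e_in: "e \<in> set (remove1 f L)"
        using False e(1) less.prems(3) by auto
      have Eab: "E a b"
        using edge_if_edge_mon[OF assms(1) _ e(2)] less.prems(1) e(1) by blast
      have M: "edges_mset (remove1 f L) = {#a, b#} + edges_mset (remove1 f (remove1 e L))"
        using edges_mset_remove1[OF e_in] e(2) by (simp add: remove1_commute)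
      from less.hyps[OF length_remove1_less[OF e(1)] edge_list_remove1[OF less.prems(1)] e(4) f_in
          less.prems(4)]
      show ?thesis
        using linked_via_edge[where E=E, OF e_in e(2) e(3)] split_linked_extend[where E=E, OF e(3) Eab]
        unfolding M by (auto simp: remove1_commute)
    qed
  qed
qed

lemma gap_freeD:
  assumes "gap_free E" "symp E" "E z w" "E a b" "\<not> E z a" "\<not> E z b"
  shows "E w a \<or> E w b"
proof -
  have "z \<noteq> a" "z \<noteq> b" "w \<noteq> a" "w \<noteq> b"
    using assms(2-) by (auto dest: sympD)
  then show ?thesis
    using assms unfolding gap_free_def by blast
qed

lemma linked_exit_remove1:
  assumes "symp E" "edge_list E L" "e \<in> set L" "edge_mon e = {#a, b#}"
    and "linked E (remove1 e L) b y" "\<not> linked E (remove1 e L) b z" "\<not> linked E L z y"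
    and "g \<in> set (remove1 e L)" "edge_mon g = {#p, q#}" "E z p"
  shows "linked E (remove1 e (remove1 g L)) b y" "\<not> linked E (remove1 e (remove1 g L)) b q"
    and "\<not> linked E (remove1 g L) q y"
proof -
  have g_in: "g \<in> set L"
    using assms(8) set_remove1_subset by fast
  have Ee: "E (fst e) (snd e)"
    using assms(2,3) by blast
  consider "linked E (remove1 g (remove1 e L)) b y"
    | "split_linked E (edges_mset (remove1 g (remove1 e L))) b p q y"
    | "split_linked E (edges_mset (remove1 g (remove1 e L))) b q p y"
    using linked_remove1_cases[OF assms(1) edge_list_remove1[OF assms(2)] assms(5,8,9)] by blast
  then show "linked E (remove1 e (remove1 g L)) b y"
  proof cases
    case 2
    then have "linked E (remove1 e L) z y"
      using split_linked_reroute[where E=E, OF _ assms(8,9,10)] by blast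
    then show ?thesis
      using linked_remove1D[where E=E, OF assms(3) Ee] assms(7) by blast
  next
    case 3
    then have "linked E (remove1 e L) z b"
      using split_linked_reroute[where E=E, OF split_linked_swap assms(8,9,10)] by blast
    then show ?thesis
      using assms(6) by (simp add: linked_sym)
  qed (simp add: remove1_commute)
  show "\<not> linked E (remove1 e (remove1 g L)) b q"
    using linked_via_edge[where E=E, OF assms(8,9,10)] assms(6)
    by (auto simp: remove1_commute linked_sym)
  show "\<not> linked E (remove1 g L) q y"
    using linked_via_edge[where E=E, OF g_in assms(9,10)] assms(7) by blast
qed

lemma gap_free_linked_exit:
  assumes "symp E" "gap_free E"
    and "edge_list E L" "e \<in> set L" "edge_mon e = {#a, b#}"
    and "linked E (remove1 e L) b y" "\<not> linked E (remove1 e L) b z" "\<not> linked E L z y"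
    and "linked E L z w"
  shows "E w a \<or> linked E (remove1 e L) b w"
  using assms(3-)
proof (induction "length L" arbitrary: L z rule: less_induct)
  case less
  have edges': "edge_list E (remove1 e L)"
    using less.prems(1) by (rule edge_list_remove1)
  have Eab: "E a b"
    using edge_if_edge_mon[OF assms(1) _ less.prems(3)] less.prems(1,2) by blast
  have nza: "\<not> E z a"
    using linked_via_edge[where E=E, OF less.prems(2,3) _ less.prems(4)] less.prems(6) by blast
  have nzb: "\<not> E z b"
    using linked_if_edge[OF _ edges'] less.prems(5) assms(1) by (blast dest: sympD)
  show ?case
  proof (cases "E z w")
    case True
    then show ?thesis
      using gap_freeD[OF assms(2,1) True Eab nza nzb] linked_if_edge[OF _ edges'] assms(1)
      by (blast dest: sympD)
  next
    case False
    obtain g p q where g: "g \<in> set L" "edge_mon g = {#p, q#}" "E z p" "linked E (remove1 g L) q w"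
      using linked_nonedgeE[OF assms(1) less.prems(7) False] .
    have "g \<noteq> e"
      using g(2,3) less.prems(3) nza nzb by (auto simp: pair_mset_eq_iff)
    then have g_in: "g \<in> set (remove1 e L)" and e_in: "e \<in> set (remove1 g L)"
      using g(1) less.prems(2) by auto
    have "E w a \<or> linked E (remove1 e (remove1 g L)) b w"
      using less.hyps[OF length_remove1_less[OF g(1)] edge_list_remove1[OF less.prems(1)] e_in
          less.prems(3) linked_exit_remove1[OF assms(1) less.prems(1-6) g_in g(2,3)] g(4)] .
    then show ?thesis
      using linked_remove1D[where E=E, OF g_in] less.prems(1) g(1) by (auto simp: remove1_commute)
  qed
qed

lemma walk_first_exit:
  assumes "symp R" "\<And>u w. A u \<Longrightarrow> B w \<Longrightarrow> R u w"
    and "0 < m" "B (g 0)" "A (g m)" "\<And>s. s < m \<Longrightarrow> \<not> R (g s) (g (Suc s))"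
  obtains t where "0 < t" "t < m" "\<not> A (g t)" "\<not> B (g t)" "B (g (t - 1))"
proof -
  have no_step: "\<not> (B (g s) \<and> A (g (Suc s)))" if "s < m" for s
    using assms(6)[OF that] assms(1,2) by (blast dest: sympD)
  have "\<not> B (g (m - 1))"
    using no_step[of "m - 1"] assms(3,5) by simp
  define t where "t = (LEAST t. \<not> B (g t))"
  have nB: "\<not> B (g t)"
    unfolding t_def by (rule LeastI) fact
  have "t \<le> m - 1"
    unfolding t_def by (rule Least_le) fact
  moreover have "0 < t"
    using nB assms(4) by (cases t) auto
  moreover have B: "B (g (t - 1))"
    using not_less_Least[of "t - 1" "\<lambda>t. \<not> B (g t)"] \<open>0 < t\<close> unfolding t_def by simp
  moreover have "\<not> A (g t)"
    using no_step[of "t - 1"] B calculation by simp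
  ultimately show thesis
    using that nB assms(3) by simp
qed

lemma mod_add_left_cancel_nat: "((j::nat) + t) mod n = (j + t') mod n \<longleftrightarrow> t mod n = t' mod n"
  by (simp add: nat_mod_eq_iff)

lemma anticycle_consecutive:
  assumes "anticycle W H ws" "1 < length ws"
  shows "\<not> H (ws ! ((j + t) mod length ws)) (ws ! ((j + Suc t) mod length ws))"
proof -
  define n where "n = length ws"
  define i where "i = (j + t) mod n"
  have n: "1 < n"
    using assms(2) by (simp add: n_def)
  then have "i < n" "Suc i mod n < n"
    by (simp_all add: i_def)
  moreover have "i \<noteq> Suc i mod n"
  proof (cases "Suc i = n")
    case True
    then show ?thesis using n by simp
  next
    case False
    then show ?thesis using \<open>i < n\<close> by simp
  qed
  moreover have "(j + Suc t) mod n = Suc i mod n"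
    by (simp add: i_def mod_Suc_eq)
  ultimately show ?thesis
    using assms(1) unfolding anticycle_def i_def n_def by auto
qed

lemma anticycle_far:
  assumes "anticycle W H ws" "Suc s < t" "t < length ws" "0 < s \<or> Suc t < length ws"
  shows "H (ws ! ((j + s) mod length ws)) (ws ! ((j + t) mod length ws))"
proof -
  define n where "n = length ws"
  define i1 i2 where "i1 = (j + s) mod n" and "i2 = (j + t) mod n"
  have n: "t < n" "0 < s \<or> Suc t < n"
    using assms(3,4) by (simp_all add: n_def)
  have "i1 < n" "i2 < n"
    using n(1) by (simp_all add: i1_def i2_def)
  moreover have "i1 \<noteq> i2"
    using assms(2) n(1) by (simp add: i1_def i2_def mod_add_left_cancel_nat)
  moreover have "i2 \<noteq> Suc i1 mod n"
    using mod_add_left_cancel_nat[of j t n "Suc s"] assms(2) n(1) by (simp add: i1_def i2_def mod_Suc_eq)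
  moreover have "i1 \<noteq> Suc i2 mod n"
  proof (cases "Suc t < n")
    case True
    then show ?thesis
      using mod_add_left_cancel_nat[of j s n "Suc t"] assms(2) by (simp add: i1_def i2_def mod_Suc_eq)
  next
    case False
    then have "Suc t = n" using n(1) by simp
    then have "Suc i2 mod n = (j + 0) mod n"
      unfolding i2_def mod_Suc_eq by (metis add_0_right add_Suc_right mod_add_self2)
    then show ?thesis
      using mod_add_left_cancel_nat[of j s n 0] assms(2) n \<open>Suc t = n\<close> by (simp add: i1_def)
  qed
  ultimately show ?thesis
    using assms(1) unfolding anticycle_def i1_def i2_def n_def by blast
qed

lemma anticycle_cong:
  assumes "\<And>x y. x \<in> set ws \<Longrightarrow> y \<in> set ws \<Longrightarrow> x \<noteq> y \<Longrightarrow> H x y \<longleftrightarrow> H' x y"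
  shows "anticycle W H ws \<longleftrightarrow> anticycle W H' ws"
proof -
  have "H (ws ! i) (ws ! j) \<longleftrightarrow> H' (ws ! i) (ws ! j)"
    if "distinct ws" "i < length ws" "j < length ws" "i \<noteq> j" for i j
    using assms that by (simp add: nth_eq_iff_index_eq)
  then show ?thesis
    unfolding anticycle_def by (intro conj_cong refl) auto
qed

lemma anticycle_map:
  assumes "inj f"
  shows "anticycle W H (map f ws) \<longleftrightarrow> anticycle (f -` W) (\<lambda>x y. H (f x) (f y)) ws"
  using assms unfolding anticycle_def
  by (auto simp: distinct_map inj_on_subset)

lemma pol_edge_InrD: "pol_edge E es (Inr k) w \<Longrightarrow> w = Inl k"
  by (cases w) auto

lemma anticycle_pol_graph_Inl:
  assumes "anticycle (pol_vertices V E es) (pol_edge E es) ws" "5 \<le> length ws"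
  obtains vs where "ws = map Inl vs"
proof -
  have "\<exists>v. w = Inl v" if w: "w \<in> set ws" for w
  proof (cases w)
    case (Inr k)
    obtain i where i: "i < length ws" "ws ! i = w"
      using w by (auto simp: in_set_conv_nth)
    define w' where "w' t = ws ! ((i + t) mod length ws)" for t
    have "w' 0 = Inr k"
      using i Inr by (simp add: w'_def)
    moreover have "pol_edge E es (w' 0) (w' 2)" "pol_edge E es (w' 0) (w' 3)"
      using anticycle_far[OF assms(1), where s=0 and t=2 and j=i]
        anticycle_far[OF assms(1), where s=0 and t=3 and j=i] assms(2)
      unfolding w'_def by simp_all
    ultimately have "w' 2 = w' 3"
      by (metis pol_edge_InrD)
    moreover have "w' 2 \<noteq> w' 3"
    proof -
      have "(i + 2) mod length ws \<noteq> (i + 3) mod length ws"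
        using mod_add_left_cancel_nat[of i 2 "length ws" 3] assms(2) by simp
      moreover have "distinct ws" "ws \<noteq> []"
        using assms by (auto simp: anticycle_def)
      ultimately show ?thesis
        unfolding w'_def by (simp add: nth_eq_iff_index_eq)
    qed
    ultimately show ?thesis by blast
  qed simp
  then show thesis
    using that ex_map_conv by metis
qed

lemma anticycle_pol_graph_map_Inl:
  "anticycle (pol_vertices V E es) (pol_edge E es) (map Inl vs) \<longleftrightarrow> anticycle V (linked E es) vs"
proof -
  have "anticycle (pol_vertices V E es) (pol_edge E es) (map Inl vs) \<longleftrightarrow>
      anticycle (Inl -` pol_vertices V E es) (\<lambda>x y. pol_edge E es (Inl x) (Inl y)) vs"
    by (rule anticycle_map) simp
  also have "Inl -` pol_vertices V E es = V"
    by (auto simp: pol_vertices_def)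
  also have "anticycle V (\<lambda>x y. pol_edge E es (Inl x) (Inl y)) vs \<longleftrightarrow> anticycle V (linked E es) vs"
    by (rule anticycle_cong) (simp add: in_colon_pair_iff_linked)
  finally show ?thesis .
qed

lemma anticycle_linked_imp_edge_shift:
  fixes vs :: "'a list" and j :: nat
  defines "c \<equiv> \<lambda>t. vs ! ((j + t) mod length vs)"
  assumes sym: "symp E" and gap: "gap_free E" and edges: "edge_list E es"
    and cycle: "anticycle V (linked E es) vs"
    and D_range: "0 < D" "D < length vs" and far_linked: "linked E es (c D) (c 0)"
  shows "E (c D) (c 0)"
proof (rule ccontr)
  assume "\<not> E (c D) (c 0)"
  then obtain e a b where e: "e \<in> set es" "edge_mon e = {#a, b#}" "E (c D) a"
      "linked E (remove1 e es) b (c 0)"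
    using linked_nonedgeE[OF sym far_linked] by blast
  define A where "A u \<longleftrightarrow> E u a" for u
  define B where "B w \<longleftrightarrow> linked E (remove1 e es) b w" for w
  have AB: "linked E es u w" if "A u" "B w" for u w
    using linked_via_edge[where E=E, OF e(1,2)] that unfolding A_def B_def by blast
  have BA: "linked E es u w" if "B u" "A w" for u w
    using AB[OF that(2,1)] by (simp add: linked_sym)
  have unlinked: "\<not> linked E es (c s) (c (Suc s))" for s
    unfolding c_def using anticycle_consecutive[OF cycle] D_range by simp
  have "B (c 0)" "A (c D)"
    using e(3,4) by (simp_all add: A_def B_def)
  then obtain t where t: "0 < t" "t < D" "\<not> A (c t)" "\<not> B (c t)" "B (c (t - 1))"
    using walk_first_exit[where R="linked E es" and A=A and B=B and g=c, OF symp_linked AB]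
      D_range(1) unlinked by blast
  have "0 < length vs - D" "A (c (D + 0))" "B (c (D + (length vs - D)))"
    using D_range \<open>A (c D)\<close> \<open>B (c 0)\<close> by (simp_all add: c_def)
  moreover have "\<not> linked E es (c (D + s)) (c (D + Suc s))" for s
    using unlinked[of "D + s"] by simp
  ultimately obtain s where s: "0 < s" "s < length vs - D" "\<not> B (c (D + s))" "\<not> A (c (D + s))"
    using walk_first_exit[where R="linked E es" and A=B and B=A and g="\<lambda>s. c (D + s)",
        OF symp_linked BA] by blast
  have "linked E es (c t) (c (D + s))"
    unfolding c_def using anticycle_far[OF cycle, of t "D + s" j] t s by simp
  moreover have "\<not> linked E es (c t) (c (t - 1))"
    using unlinked[of "t - 1"] t(1) by (simp add: linked_sym)
  ultimately have "A (c (D + s)) \<or> B (c (D + s))"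
    using gap_free_linked_exit[OF sym gap edges e(1,2)] t(4,5) unfolding A_def B_def by blast
  then show False
    using s by blast
qed

lemma anticycle_linked_imp_anticycle:
  assumes "symp E" "gap_free E" "edge_list E es" "anticycle V (linked E es) vs"
  shows "anticycle V E vs"
proof -
  have edge_if_linked: "E x y" if xy: "x \<in> set vs" "y \<in> set vs" "x \<noteq> y" "linked E es x y" for x y
  proof -
    obtain i j where ij: "i < length vs" "j < length vs" "vs ! i = x" "vs ! j = y"
      using xy(1,2) by (auto simp: in_set_conv_nth)
    have "vs \<noteq> []"
      using xy(1) by auto
    define D where "D = (i + length vs - j) mod length vs"
    have shift: "(j + D) mod length vs = i"
      using ij(1,2) unfolding D_def by (simp add: mod_add_right_eq)
    moreover have "D < length vs"
      using \<open>vs \<noteq> []\<close> by (simp add: D_def)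
    moreover have "0 < D"
      using shift ij xy(3) by (cases D) auto
    ultimately show ?thesis
      using anticycle_linked_imp_edge_shift[OF assms, of D j] ij xy(4) by simp
  qed
  have "anticycle V (linked E es) vs \<longleftrightarrow> anticycle V E vs"
    by (rule anticycle_cong) (use edge_if_linked linked_if_edge[OF _ assms(3)] in blast)
  with assms(4) show ?thesis by blast
qed

theorem lemma6p15:
  fixes V :: "'a set" and E :: "'a \<Rightarrow> 'a \<Rightarrow> bool"
    and es :: "('a \<times> 'a) list" and ws :: "('a + 'a) list"
  assumes "simple_graph V E"
    and "gap_free E"
    and "length es \<ge> 1"
    and "\<forall>e\<in>set es. E (fst e) (snd e)"
    and "length ws \<ge> 5"
    and "anticycle (pol_vertices V E es) (pol_edge E es) ws"
  shows "\<exists>vs. ws = map Inl vs \<and> anticycle V E vs"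
proof -
  have "symp E"
    using assms(1) unfolding simple_graph_def by (blast intro: sympI)
  obtain vs where ws: "ws = map Inl vs"
    using anticycle_pol_graph_Inl[OF assms(6,5)] .
  then have "anticycle V (linked E es) vs"
    using assms(6) anticycle_pol_graph_map_Inl by blast
  then have "anticycle V E vs"
    using anticycle_linked_imp_anticycle[OF \<open>symp E\<close> assms(2,4)] by blast
  with ws show ?thesis by blast
qed

end
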